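(* On $S^{2n+1}\subset{\mathbb C}^{n+1}$ with coordinates $z_i=x_i+\sqrt{-1}y_i$, let $w=(w_0,\dots,w_n)$ with all $w_i>0$ chosen generically so that the only closed orbits of the Reeb field $\xi_w=\sum_iw_i(x_i\partial_{y_i}-y_i\partial_{x_i})$ are $L_i=\{|z_i|=1\}$, and let $g_w$ be the metric of the deformed Sasakian structure with contact form $\eta_w=\eta/\sum_iw_i(x_i^2+y_i^2)$, $\eta=\sum_i(x_idy_i-y_idx_i)$. Then for any $\beta=(\beta_0,\dots,\beta_n)$ for which the denominators are nonzero, $$\mathrm{Vol}(S^{2n+1},g_w)=\frac{2\pi^{n+1}}{n!}\sum_{i=0}^n\frac{1}{w_i^{n+1}}\frac{\beta_i^n}{\prod_{j\ne i}\left(\frac{\beta_i}{w_i}w_j-\beta_j\right)}=\frac{2\pi^{n+1}}{n!}\cdot\frac{1}{w_0w_1\cdots w_n}.$$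
   Context: The deformed structure (deformation of type I of the standard Sasakian structure) has the same CR structure $(\ker\eta,J)$ as the standard one, Reeb field $\xi_w$, contact form $\eta_w$, and metric $g_w=\tfrac12 d\eta_w\circ(1\otimes J)+\eta_w\otimes\eta_w$. For $w=(1,\dots,1)$ this is the round unit sphere. *)

theory Defs
  imports "HOL-Analysis.Analysis"
begin

text \<open>Points and tangent vectors of C^(n+1) = R^(2n+2) are functions nat => real;
 real coordinate 2i is x_i and coordinate 2i+1 is y_i (i = 0..n).\<close>

definition xc :: "(nat \<Rightarrow> real) \<Rightarrow> nat \<Rightarrow> real" where
  "xc p i = p (2 * i)"
definition yc :: "(nat \<Rightarrow> real) \<Rightarrow> nat \<Rightarrow> real" where
  "yc p i = p (2 * i + 1)"
definition mkvec :: "(nat \<Rightarrow> real) \<Rightarrow> (nat \<Rightarrow> real) \<Rightarrow> nat \<Rightarrow> real" where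
  "mkvec a b k = (if even k then a (k div 2) else b (k div 2))"

definition rinner :: "nat \<Rightarrow> (nat \<Rightarrow> real) \<Rightarrow> (nat \<Rightarrow> real) \<Rightarrow> real" where
  "rinner n u v = (\<Sum>k<2*n+2. u k * v k)"

definition unit_sphere :: "nat \<Rightarrow> (nat \<Rightarrow> real) set" where
  "unit_sphere n = {p. rinner n p p = 1}"

definition fw :: "nat \<Rightarrow> (nat \<Rightarrow> real) \<Rightarrow> (nat \<Rightarrow> real) \<Rightarrow> real" where
  "fw n w p = (\<Sum>i\<le>n. w i * ((xc p i)\<^sup>2 + (yc p i)\<^sup>2))"

definition eta0 :: "nat \<Rightarrow> (nat \<Rightarrow> real) \<Rightarrow> (nat \<Rightarrow> real) \<Rightarrow> real" where
  "eta0 n p v = (\<Sum>i\<le>n. xc p i * yc v i - yc p i * xc v i)"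

definition deta0 :: "nat \<Rightarrow> (nat \<Rightarrow> real) \<Rightarrow> (nat \<Rightarrow> real) \<Rightarrow> real" where
  "deta0 n u v = 2 * (\<Sum>i\<le>n. xc u i * yc v i - yc u i * xc v i)"

definition dfw :: "nat \<Rightarrow> (nat \<Rightarrow> real) \<Rightarrow> (nat \<Rightarrow> real) \<Rightarrow> (nat \<Rightarrow> real) \<Rightarrow> real" where
  "dfw n w p v = (\<Sum>i\<le>n. 2 * w i * (xc p i * xc v i + yc p i * yc v i))"

definition eta_w :: "nat \<Rightarrow> (nat \<Rightarrow> real) \<Rightarrow> (nat \<Rightarrow> real) \<Rightarrow> (nat \<Rightarrow> real) \<Rightarrow> real" where
  "eta_w n w p v = eta0 n p v / fw n w p"

definition deta_w :: "nat \<Rightarrow> (nat \<Rightarrow> real) \<Rightarrow> (nat \<Rightarrow> real) \<Rightarrow> (nat \<Rightarrow> real) \<Rightarrow> (nat \<Rightarrow> real) \<Rightarrow> real" where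
  "deta_w n w p u v = deta0 n u v / fw n w p
     - (dfw n w p u * eta0 n p v - dfw n w p v * eta0 n p u) / (fw n w p)\<^sup>2"

definition reeb_w :: "nat \<Rightarrow> (nat \<Rightarrow> real) \<Rightarrow> (nat \<Rightarrow> real) \<Rightarrow> nat \<Rightarrow> real" where
  "reeb_w n w p = mkvec (\<lambda>i. - w i * yc p i) (\<lambda>i. w i * xc p i)"

definition Jst :: "(nat \<Rightarrow> real) \<Rightarrow> nat \<Rightarrow> real" where
  "Jst v = mkvec (\<lambda>i. - yc v i) (\<lambda>i. xc v i)"

text \<open>Phi_w: equal to J on ker eta, Phi_w xi_w = 0\<close>
definition Phi_w :: "nat \<Rightarrow> (nat \<Rightarrow> real) \<Rightarrow> (nat \<Rightarrow> real) \<Rightarrow> (nat \<Rightarrow> real) \<Rightarrow> nat \<Rightarrow> real" where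
  "Phi_w n w p v = Jst (\<lambda>k. v k - eta_w n w p v * reeb_w n w p k)"

definition g_w :: "nat \<Rightarrow> (nat \<Rightarrow> real) \<Rightarrow> (nat \<Rightarrow> real) \<Rightarrow> (nat \<Rightarrow> real) \<Rightarrow> (nat \<Rightarrow> real) \<Rightarrow> real" where
  "g_w n w p u v = 1/2 * deta_w n w p u (Phi_w n w p v) + eta_w n w p u * eta_w n w p v"

text \<open>Riemannian volume density of g_w w.r.t. the round surface measure:
 sqrt of the determinant of g_w|T_pS in a round-orthonormal frame, computed by extending
 g_w by the unit normal p (orthogonal projection onto T_pS plus the normal part).\<close>
definition tproj :: "nat \<Rightarrow> (nat \<Rightarrow> real) \<Rightarrow> (nat \<Rightarrow> real) \<Rightarrow> nat \<Rightarrow> real" where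
  "tproj n p u = (\<lambda>k. u k - rinner n u p * p k)"

definition ebasis :: "nat \<Rightarrow> nat \<Rightarrow> real" where
  "ebasis a = (\<lambda>k. if k = a then 1 else 0)"

definition det_nat :: "nat \<Rightarrow> (nat \<Rightarrow> nat \<Rightarrow> real) \<Rightarrow> real" where
  "det_nat N M = (\<Sum>q | q permutes {..<N}. of_int (sign q) * (\<Prod>k<N. M k (q k)))"

definition vol_density :: "nat \<Rightarrow> (nat \<Rightarrow> real) \<Rightarrow> (nat \<Rightarrow> real) \<Rightarrow> real" where
  "vol_density n w p = sqrt (det_nat (2*n+2) (\<lambda>a b.
      g_w n w p (tproj n p (ebasis a)) (tproj n p (ebasis b))
      + rinner n (ebasis a) p * rinner n (ebasis b) p))"

text \<open>Integral over the round unit sphere S^(2n+1) with respect to its surface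
 (= Riemannian) measure, via the cone construction: sigma(A) = (2n+2) * Lebesgue(cone over A).\<close>
definition sphere_integral :: "nat \<Rightarrow> ((nat \<Rightarrow> real) \<Rightarrow> real) \<Rightarrow> real" where
  "sphere_integral n h = real (2*n+2) *
     (\<integral>x. indicator {x. rinner n x x \<le> 1} x * h (\<lambda>k. x k / sqrt (rinner n x x))
        \<partial>(Pi\<^sub>M {..<2*n+2} (\<lambda>_. lborel)))"

definition deformed_volume :: "nat \<Rightarrow> (nat \<Rightarrow> real) \<Rightarrow> real" where
  "deformed_volume n w = sphere_integral n (vol_density n w)"

definition reeb_flow :: "nat \<Rightarrow> (nat \<Rightarrow> real) \<Rightarrow> real \<Rightarrow> (nat \<Rightarrow> real) \<Rightarrow> nat \<Rightarrow> real" where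
  "reeb_flow n w t p = mkvec
     (\<lambda>i. xc p i * cos (w i * t) - yc p i * sin (w i * t))
     (\<lambda>i. xc p i * sin (w i * t) + yc p i * cos (w i * t))"

definition closed_reeb_orbit :: "nat \<Rightarrow> (nat \<Rightarrow> real) \<Rightarrow> (nat \<Rightarrow> real) \<Rightarrow> bool" where
  "closed_reeb_orbit n w p \<longleftrightarrow> (\<exists>T>0. \<forall>k<2*n+2. reeb_flow n w T p k = p k)"

end

theory Submission
  imports Defs "Jordan_Normal_Form.Determinant" "HOL-Probability.Distributions"
    "HOL-Computational_Algebra.Polynomial"
begin

(*
  On the unit sphere, the Gram matrix of g_w on the tangent space, completed by the unit
  normal, is (1/f) (I + U V) with f = sum_i w_i |z_i|^2 and U, V of rank 3 (built from p,
  J p and J (w p)); Sylvester's identity det (I + U V) = det (I + V U) reduces it to a 3x3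
  determinant equal to 1, so the volume density of g_w is f^-(n+1).

  The sphere integral is (2n+2) times the ball integral of the radially extended integrand,
  and f is 2-homogeneous, so the volume is (2n+2) times the ball integral of
  (|x|^2 / f x)^(n+1). The substitution x = sqrt r * y turns
  both this integrand and the Gaussian exp (- f x) into radial integrals equal to 1/(n+1),
  resp. n!, times f y ^ -(n+1); comparing with the Gaussian integral pi^(n+1) / prod_i w_i
  gives the volume. With u_i = beta_i / w_i the beta-sum is (1 / prod_i w_i) times
  sum_i u_i^n / prod_(j \<noteq> i) (u_i - u_j), the leading coefficient of the Lagrange interpolant
  of u^n at the nodes u_i, which is 1.
*)

section \<open>A Lagrange interpolation identity\<close>

lemma sum_power_div_prod_diff:
  fixes u :: "nat \<Rightarrow> 'a::field"
  assumes "inj_on u {..n}"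
  shows "(\<Sum>i\<le>n. u i ^ n / (\<Prod>j\<in>{..n}-{i}. u i - u j)) = 1"
proof -
  define L where "L i = (\<Prod>j\<in>{..n}-{i}. [:- u j, 1:])" for i
  define P where "P = (\<Sum>i\<le>n. Polynomial.smult (u i ^ n / (\<Prod>j\<in>{..n}-{i}. u i - u j)) (L i))"
  have poly_L: "poly (L i) x = (\<Prod>j\<in>{..n}-{i}. x - u j)" for i x
    by (simp add: L_def poly_prod)
  have degree_L: "degree (L i) = n" if "i \<le> n" for i
    unfolding L_def using that by (subst degree_prod_eq_sum_degree) auto
  have coeff_L: "coeff (L i) n = 1" if "i \<le> n" for i
    using lead_coeff_prod[of "\<lambda>j. [:- u j, 1:]" "{..n}-{i}"] degree_L[OF that]
    by (simp add: L_def)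
  have interpolates: "poly P (u k) = u k ^ n" if "k \<le> n" for k
  proof -
    have "poly (L i) (u k) = 0" if "i \<in> {..n} - {k}" for i
      unfolding poly_L using \<open>k \<le> n\<close> that by (intro prod_zero) auto
    then have "poly P (u k) = u k ^ n / (\<Prod>j\<in>{..n}-{k}. u k - u j) * poly (L k) (u k)"
      using that by (simp add: P_def poly_sum sum.remove[of _ k] sum.neutral)
    moreover have "(\<Prod>j\<in>{..n}-{k}. u k - u j) \<noteq> 0"
      using assms \<open>k \<le> n\<close> by (auto simp: inj_on_def)
    ultimately show ?thesis by (simp add: poly_L)
  qed
  have "P = monom 1 n"
  proof (rule poly_eqI_degree)
    show "poly P x = poly (monom 1 n) x" if "x \<in> u ` {..n}" for x
      using that interpolates by (auto simp: poly_monom)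
    have "degree P \<le> n"
      unfolding P_def using degree_L by (intro degree_sum_le order.trans[OF degree_smult_le]) auto
    then show "degree P < card (u ` {..n})" "degree (monom 1 n) < card (u ` {..n})"
      using card_image[OF assms] by (simp_all add: degree_monom_le le_imp_less_Suc)
  qed
  then have "coeff P n = 1" by simp
  then show ?thesis by (simp add: P_def coeff_sum coeff_L)
qed

lemma weighted_sum_power_div_prod_diff:
  fixes w \<beta> :: "nat \<Rightarrow> 'a::field"
  assumes w: "\<forall>i\<le>n. w i \<noteq> 0"
    and denom: "\<forall>i\<le>n. (\<Prod>j\<in>{..n}-{i}. \<beta> i / w i * w j - \<beta> j) \<noteq> 0"
  shows "(\<Sum>i\<le>n. 1 / w i ^ (n+1) * (\<beta> i ^ n / (\<Prod>j\<in>{..n}-{i}. \<beta> i / w i * w j - \<beta> j)))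
         = 1 / (\<Prod>i\<le>n. w i)"
proof -
  define u where "u i = \<beta> i / w i" for i
  have factor: "\<beta> i / w i * w j - \<beta> j = w j * (u i - u j)" if "j \<le> n" for i j
    using w that by (simp add: u_def field_simps)
  have prod_factor: "(\<Prod>j\<in>{..n}-{i}. \<beta> i / w i * w j - \<beta> j)
      = (\<Prod>j\<in>{..n}-{i}. w j) * (\<Prod>j\<in>{..n}-{i}. u i - u j)" for i
    unfolding prod.distrib[symmetric] by (intro prod.cong refl factor) auto
  have "inj_on u {..n}"
  proof (rule inj_onI)
    fix i j assume "i \<in> {..n}" "j \<in> {..n}" "u i = u j"
    then show "i = j"
      using denom factor[of j i] by (auto simp: prod_zero_iff)
  qed
  have summand: "1 / w i ^ (n+1) * (\<beta> i ^ n / (\<Prod>j\<in>{..n}-{i}. \<beta> i / w i * w j - \<beta> j))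
      = (u i ^ n / (\<Prod>j\<in>{..n}-{i}. u i - u j)) / (\<Prod>i\<le>n. w i)" if "i \<le> n" for i
  proof -
    have "\<beta> i ^ n = u i ^ n * w i ^ n"
      using w that by (simp add: u_def power_divide)
    moreover have "(\<Prod>i\<le>n. w i) = w i * (\<Prod>j\<in>{..n}-{i}. w j)"
      using that by (simp add: prod.remove)
    ultimately show ?thesis
      unfolding prod_factor using w that by simp
  qed
  have "(\<Sum>i\<le>n. 1 / w i ^ (n+1) * (\<beta> i ^ n / (\<Prod>j\<in>{..n}-{i}. \<beta> i / w i * w j - \<beta> j)))
      = (\<Sum>i\<le>n. u i ^ n / (\<Prod>j\<in>{..n}-{i}. u i - u j)) / (\<Prod>i\<le>n. w i)"
    unfolding sum_divide_distrib by (intro sum.cong refl summand) simp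
  also have "\<dots> = 1 / (\<Prod>i\<le>n. w i)"
    by (simp add: sum_power_div_prod_diff[OF \<open>inj_on u {..n}\<close>])
  finally show ?thesis .
qed


section \<open>The volume density on the sphere\<close>

lemma sum_lessThan_pairs: "(\<Sum>k<2*n+2. h k) = (\<Sum>i\<le>(n::nat). h (2*i) + h (2*i+1))"
  by (induction n) (simp_all add: algebra_simps)

lemma prod_lessThan_pairs: "(\<Prod>k<2*n+2. h k) = (\<Prod>i\<le>(n::nat). h (2*i) * h (2*i+1))"
  by (induction n) (simp_all add: algebra_simps)

lemma mkvec_even [simp]: "mkvec a b (2*i) = a i"
  and mkvec_odd [simp]: "mkvec a b (Suc (2*i)) = b i"
  by (simp_all add: mkvec_def)

lemma xc_mkvec [simp]: "xc (mkvec a b) = a"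
  and yc_mkvec [simp]: "yc (mkvec a b) = b"
  by (simp_all add: xc_def yc_def fun_eq_iff)

definition wdiag :: "(nat \<Rightarrow> real) \<Rightarrow> (nat \<Rightarrow> real) \<Rightarrow> nat \<Rightarrow> real" where
  "wdiag w p = mkvec (\<lambda>i. w i * xc p i) (\<lambda>i. w i * yc p i)"

lemma Jst_even [simp]: "Jst v (2*i) = - v (Suc (2*i))"
  and Jst_odd [simp]: "Jst v (Suc (2*i)) = v (2*i)"
  by (simp_all add: Jst_def xc_def yc_def)

lemma wdiag_even [simp]: "wdiag w p (2*i) = w i * p (2*i)"
  and wdiag_odd [simp]: "wdiag w p (Suc (2*i)) = w i * p (Suc (2*i))"
  by (simp_all add: wdiag_def xc_def yc_def)

lemma rinner_pairs: "rinner n u v = (\<Sum>i\<le>n. u (2*i) * v (2*i) + u (Suc (2*i)) * v (Suc (2*i)))"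
  unfolding rinner_def sum_lessThan_pairs by simp

lemma rinner_commute: "rinner n u v = rinner n v u"
  unfolding rinner_def by (simp add: mult.commute)

lemma rinner_add_left: "rinner n (\<lambda>k. a k + b k) v = rinner n a v + rinner n b v"
  and rinner_diff_left: "rinner n (\<lambda>k. a k - b k) v = rinner n a v - rinner n b v"
  and rinner_minus_left: "rinner n (\<lambda>k. - a k) v = - rinner n a v"
  and rinner_scale_left: "rinner n (\<lambda>k. c * a k) v = c * rinner n a v"
  and rinner_add_right: "rinner n v (\<lambda>k. a k + b k) = rinner n v a + rinner n v b"
  and rinner_diff_right: "rinner n v (\<lambda>k. a k - b k) = rinner n v a - rinner n v b"
  and rinner_scale_right: "rinner n v (\<lambda>k. c * a k) = c * rinner n v a"
  unfolding rinner_def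
  by (simp_all add: algebra_simps sum.distrib sum_subtractf sum_negf sum_distrib_left)

lemma rinner_divide_left: "rinner n (\<lambda>k. a k / d) v = rinner n a v / d"
  unfolding rinner_def sum_divide_distrib by simp

lemmas rinner_linear =
  rinner_add_left rinner_diff_left rinner_minus_left rinner_scale_left rinner_divide_left
  rinner_add_right rinner_diff_right rinner_scale_right

lemma rinner_ebasis_left: "a < 2*n+2 \<Longrightarrow> rinner n (ebasis a) v = v a"
  unfolding rinner_def ebasis_def by (simp add: if_distrib[of "\<lambda>x. x * _"] cong: if_cong)

lemma rinner_ebasis_right: "a < 2*n+2 \<Longrightarrow> rinner n v (ebasis a) = v a"
  using rinner_ebasis_left[of a n v] rinner_commute[of n v "ebasis a"] by simp

lemma Jst_Jst: "Jst (Jst u) = (\<lambda>k. - u k)"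
  unfolding Jst_def mkvec_def xc_def yc_def by (auto simp: fun_eq_iff)

lemma Jst_diff: "Jst (\<lambda>k. a k - b k) = (\<lambda>k. Jst a k - Jst b k)"
  and Jst_scale: "Jst (\<lambda>k. c * a k) = (\<lambda>k. c * Jst a k)"
  unfolding Jst_def mkvec_def xc_def yc_def by (auto simp: fun_eq_iff)

lemma rinner_Jst_Jst: "rinner n (Jst u) (Jst v) = rinner n u v"
  and rinner_Jst_left: "rinner n (Jst u) v = - rinner n u (Jst v)"
  and rinner_Jst_self: "rinner n (Jst p) p = 0"
  and rinner_Jst_wdiag: "rinner n (Jst p) (wdiag w p) = 0"
  unfolding rinner_pairs sum_negf[symmetric]
  by (intro sum.cong sum.neutral refl ballI; simp; simp add: algebra_simps)+

lemma eta0_eq_rinner: "eta0 n p v = rinner n (Jst p) v"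
  and deta0_eq_rinner: "deta0 n u v = 2 * rinner n (Jst u) v"
  and dfw_eq_rinner: "dfw n w p v = 2 * rinner n (wdiag w p) v"
  and fw_eq_rinner: "fw n w p = rinner n (wdiag w p) p"
  unfolding eta0_def deta0_def dfw_def fw_def rinner_pairs sum_distrib_left
  by (intro sum.cong refl; simp add: xc_def yc_def; simp add: algebra_simps power2_eq_square)+

lemma reeb_w_eq_Jst_wdiag: "reeb_w n w p = Jst (wdiag w p)"
  unfolding reeb_w_def Jst_def wdiag_def by (simp add: xc_def yc_def)

lemma Phi_w_eq: "Phi_w n w p v = (\<lambda>k. Jst v k + eta_w n w p v * wdiag w p k)"
  unfolding Phi_w_def reeb_w_eq_Jst_wdiag Jst_diff Jst_scale Jst_Jst by simp

lemma rinner_frame_vectors: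
  assumes "rinner n p p = 1"
  shows "rinner n p (Jst p) = 0" "rinner n (Jst p) p = 0"
    and "rinner n p (Jst (wdiag w p)) = 0" "rinner n (Jst (wdiag w p)) p = 0"
    and "rinner n (Jst p) (Jst p) = 1"
    and "rinner n (Jst p) (Jst (wdiag w p)) = fw n w p" "rinner n (Jst (wdiag w p)) (Jst p) = fw n w p"
    and "rinner n (Jst (wdiag w p)) (Jst (wdiag w p)) = rinner n (wdiag w p) (wdiag w p)"
proof -
  show "rinner n (Jst p) p = 0" "rinner n p (Jst p) = 0"
    using rinner_Jst_self[of n p] rinner_commute[of n p "Jst p"] by simp_all
  show "rinner n p (Jst (wdiag w p)) = 0" "rinner n (Jst (wdiag w p)) p = 0"
    using rinner_Jst_left[of n p "wdiag w p"] rinner_Jst_wdiag[of n p w]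
      rinner_commute[of n p "Jst (wdiag w p)"] by simp_all
  show "rinner n (Jst p) (Jst (wdiag w p)) = fw n w p" "rinner n (Jst (wdiag w p)) (Jst p) = fw n w p"
    using rinner_commute[of n p "wdiag w p"] rinner_commute[of n "Jst p" "Jst (wdiag w p)"]
    by (simp_all add: rinner_Jst_Jst fw_eq_rinner)
qed (use assms in \<open>simp_all add: rinner_Jst_Jst\<close>)

lemma g_w_tangent:
  assumes "rinner n p v = 0" and "fw n w p \<noteq> 0"
  shows "g_w n w p u v =
    (rinner n u v
     - (rinner n (Jst p) u * rinner n (Jst (wdiag w p)) v
        + rinner n (Jst (wdiag w p)) u * rinner n (Jst p) v) / fw n w p
     + (rinner n (wdiag w p) (wdiag w p) / (fw n w p)\<^sup>2 + 1 / fw n w p)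
        * rinner n (Jst p) u * rinner n (Jst p) v) / fw n w p"
proof -
  define f where "f = fw n w p"
  define C where "C = wdiag w p"
  define E where "E = rinner n (Jst p) v / f"
  have Phi: "Phi_w n w p v = (\<lambda>k. Jst v k + E * C k)"
    unfolding Phi_w_eq eta_w_def eta0_eq_rinner E_def f_def C_def ..
  have deta0_Phi: "deta0 n u (Phi_w n w p v) = 2 * (rinner n u v - E * rinner n (Jst C) u)"
    unfolding Phi deta0_eq_rinner rinner_linear rinner_Jst_Jst
    by (simp add: rinner_Jst_left rinner_commute[of n u])
  have eta0_Phi: "eta0 n p (Phi_w n w p v) = 0"
    unfolding Phi eta0_eq_rinner rinner_linear rinner_Jst_Jst
    using assms(1) by (simp add: C_def rinner_Jst_wdiag)
  have dfw_Phi: "dfw n w p (Phi_w n w p v) = 2 * (E * rinner n C C - rinner n (Jst C) v)"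
    unfolding Phi dfw_eq_rinner rinner_linear
    by (simp add: C_def rinner_commute[of n "wdiag w p" "Jst v"] rinner_Jst_left[of n v]
        rinner_commute[of n v])
  show ?thesis
    using assms(2)
    unfolding g_w_def deta_w_def deta0_Phi eta0_Phi dfw_Phi
    unfolding eta_w_def eta0_eq_rinner f_def[symmetric] C_def[symmetric] E_def
    by (simp add: field_simps power2_eq_square)
qed

lemma rinner_tproj_right: "rinner n x (tproj n p u) = rinner n x u - rinner n u p * rinner n x p"
  unfolding tproj_def rinner_linear ..

lemma rinner_tproj_left: "rinner n (tproj n p u) x = rinner n u x - rinner n u p * rinner n p x"
  unfolding tproj_def rinner_linear ..

definition vol_matrix :: "nat \<Rightarrow> (nat \<Rightarrow> real) \<Rightarrow> (nat \<Rightarrow> real) \<Rightarrow> nat \<Rightarrow> nat \<Rightarrow> real" where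
  "vol_matrix n w p a b = g_w n w p (tproj n p (ebasis a)) (tproj n p (ebasis b))
     + rinner n (ebasis a) p * rinner n (ebasis b) p"

lemma vol_density_eq_det: "vol_density n w p = sqrt (det_nat (2*n+2) (vol_matrix n w p))"
  unfolding vol_density_def vol_matrix_def ..

lemma vol_matrix_entry:
  assumes p: "rinner n p p = 1" and f: "fw n w p \<noteq> 0" and a: "a < 2*n+2" and b: "b < 2*n+2"
  shows "vol_matrix n w p a b =
    (of_bool (a = b) + (fw n w p - 1) * p a * p b
     + Jst p a * ((rinner n (wdiag w p) (wdiag w p) / (fw n w p)\<^sup>2 + 1 / fw n w p) * Jst p b
                  - Jst (wdiag w p) b / fw n w p)
     - Jst (wdiag w p) a * Jst p b / fw n w p) / fw n w p" (is "_ = ?rhs")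
proof -
  note orth_p = rinner_frame_vectors(2,4)[OF p]
  have tangent_coord: "rinner n x (tproj n p (ebasis c)) = x c" if "rinner n x p = 0" "c < 2*n+2" for x c
    using that by (simp add: rinner_tproj_right rinner_ebasis_left rinner_ebasis_right)
  have tangent_b: "rinner n p (tproj n p (ebasis b)) = 0"
    using b p by (simp add: rinner_tproj_right rinner_ebasis_left rinner_ebasis_right)
  have tangent_ab: "rinner n (tproj n p (ebasis a)) (tproj n p (ebasis b)) = of_bool (a = b) - p a * p b"
    unfolding rinner_tproj_right rinner_tproj_left rinner_ebasis_left[OF a]
      rinner_ebasis_right[OF a] rinner_ebasis_right[OF b]
    using p by (simp add: ebasis_def)
  have "vol_matrix n w p a b =
    (of_bool (a = b) - p a * p b
     - (Jst p a * Jst (wdiag w p) b + Jst (wdiag w p) a * Jst p b) / fw n w p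
     + (rinner n (wdiag w p) (wdiag w p) / (fw n w p)\<^sup>2 + 1 / fw n w p) * Jst p a * Jst p b)
    / fw n w p + p a * p b"
    unfolding vol_matrix_def g_w_tangent[OF tangent_b f] tangent_ab
    using tangent_coord[OF orth_p(1) a] tangent_coord[OF orth_p(1) b]
      tangent_coord[OF orth_p(2) a] tangent_coord[OF orth_p(2) b]
    by (simp add: rinner_ebasis_left[OF a] rinner_ebasis_left[OF b])
  also have "\<dots> = ?rhs"
    using f by (simp add: field_simps)
  finally show ?thesis .
qed

lemma det_one_add_mult_commute:
  fixes U V :: "'a::idom mat"
  assumes U: "U \<in> carrier_mat N k" and V: "V \<in> carrier_mat k N"
  shows "det (1\<^sub>m N + U * V) = det (1\<^sub>m k + V * U)"
proof -
  have UV: "U * V \<in> carrier_mat N N" and VU: "V * U \<in> carrier_mat k k"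
    using U V by auto
  define X where "X = four_block_mat (1\<^sub>m N + U * V) (- U) (0\<^sub>m k N) (1\<^sub>m k)"
  define Y where "Y = four_block_mat (1\<^sub>m N) (0\<^sub>m N k) V (1\<^sub>m k)"
  define W where "W = four_block_mat (1\<^sub>m N) (- U) (0\<^sub>m k N) (1\<^sub>m k + V * U)"
  have "(1\<^sub>m N + U * V) * 1\<^sub>m N + (- U) * V = 1\<^sub>m N + U * V + - (U * V)"
    using U V UV by simp
  also have "\<dots> = 1\<^sub>m N + (U * V + - (U * V))"
    using UV by (intro assoc_add_mat) auto
  also have "\<dots> = 1\<^sub>m N"
    using UV by (simp add: add_uminus_minus_mat)
  finally have XY: "X * Y = four_block_mat (1\<^sub>m N) (- U) V (1\<^sub>m k)"
    unfolding X_def Y_def using U V UV by (subst mult_four_block_mat[of _ N N _ k _ k _ _ N _ k]) auto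
  have "V * (- U) + 1\<^sub>m k * (1\<^sub>m k + V * U) = 1\<^sub>m k + V * U + - (V * U)"
    using U V VU comm_add_mat[of "- (V * U)" k k "1\<^sub>m k + V * U"] by simp
  also have "\<dots> = 1\<^sub>m k + (V * U + - (V * U))"
    using VU by (intro assoc_add_mat) auto
  also have "\<dots> = 1\<^sub>m k"
    using VU by (simp add: add_uminus_minus_mat)
  finally have YW: "Y * W = four_block_mat (1\<^sub>m N) (- U) V (1\<^sub>m k)"
    unfolding W_def Y_def using U V VU by (subst mult_four_block_mat[of _ N N _ k _ k _ _ N _ k]) auto
  have "X \<in> carrier_mat (N + k) (N + k)" "Y \<in> carrier_mat (N + k) (N + k)"
    "W \<in> carrier_mat (N + k) (N + k)"
    unfolding X_def Y_def W_def using U V UV VU by auto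
  then have "det X * det Y = det Y * det W"
    using XY YW by (metis det_mult)
  moreover have "det Y = 1"
    unfolding Y_def using V by (subst det_four_block_mat_upper_right_zero[of _ N _ k]) auto
  moreover have "det X = det (1\<^sub>m N + U * V)"
    unfolding X_def using U UV by (subst det_four_block_mat_lower_left_zero[of _ N _ k]) auto
  moreover have "det W = det (1\<^sub>m k + V * U)"
    unfolding W_def using U VU by (subst det_four_block_mat_lower_left_zero[of _ N _ k]) auto
  ultimately show ?thesis by simp
qed

lemma det_mat2:
  fixes K :: "nat \<Rightarrow> nat \<Rightarrow> 'a::idom"
  shows "det (mat 2 2 (\<lambda>(i, j). K i j)) = K 0 0 * K 1 1 - K 0 1 * K 1 0"
proof -
  let ?s = "\<lambda>x. mat 1 1 (\<lambda>_. x) :: 'a mat"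
  have "mat 2 2 (\<lambda>(i, j). K i j) = four_block_mat (?s (K 0 0)) (?s (K 0 1)) (?s (K 1 0)) (?s (K 1 1))"
    by (rule eq_matI) (auto simp: less_Suc_eq numeral_2_eq_2)
  then have "det (mat 2 2 (\<lambda>(i, j). K i j)) = det (?s (K 0 0) * ?s (K 1 1) - ?s (K 0 1) * ?s (K 1 0))"
    by (simp only:) (rule det_four_block_mat; auto intro!: eq_matI simp: scalar_prod_def)
  also have "?s (K 0 0) * ?s (K 1 1) - ?s (K 0 1) * ?s (K 1 0) = ?s (K 0 0 * K 1 1 - K 0 1 * K 1 0)"
    by (rule eq_matI) (auto simp: scalar_prod_def)
  finally show ?thesis
    by (simp add: det_single)
qed

lemma det_mat3_block_diag:
  fixes K :: "nat \<Rightarrow> nat \<Rightarrow> 'a::idom"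
  shows "det (mat 3 3 (\<lambda>(i, j). if i = 0 \<and> j = 0 then c else if i = 0 \<or> j = 0 then 0
                              else K (i - 1) (j - 1)))
         = c * (K 0 0 * K 1 1 - K 0 1 * K 1 0)"
proof -
  have "mat 3 3 (\<lambda>(i, j). if i = 0 \<and> j = 0 then c else if i = 0 \<or> j = 0 then 0 else K (i - 1) (j - 1))
      = four_block_mat (mat 1 1 (\<lambda>_. c)) (0\<^sub>m 1 2) (0\<^sub>m 2 1) (mat 2 2 (\<lambda>(i, j). K i j))"
    by (rule eq_matI) (auto simp: less_Suc_eq numeral_3_eq_3 numeral_2_eq_2)
  then show ?thesis
    by (simp add: det_four_block_mat_upper_right_zero[of _ 1 _ 2] det_single det_mat2)
qed

lemma det_nat_eq_det: "det_nat N M = det (mat N N (\<lambda>(i, j). M i j))"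
  unfolding det_def det_nat_def by (simp add: lessThan_atLeast0)

definition frame :: "nat \<Rightarrow> (nat \<Rightarrow> real) \<Rightarrow> (nat \<Rightarrow> real) \<Rightarrow> real mat" where
  "frame n w p = mat (2*n+2) 3 (\<lambda>(a, k). ([p, Jst p, Jst (wdiag w p)] ! k) a)"

definition coframe :: "nat \<Rightarrow> (nat \<Rightarrow> real) \<Rightarrow> (nat \<Rightarrow> real) \<Rightarrow> real mat" where
  "coframe n w p =
    (let f = fw n w p; C = wdiag w p; al = rinner n C C / f\<^sup>2 + 1 / f
     in mat 3 (2*n+2) (\<lambda>(k, b).
          ([\<lambda>b. (f - 1) * p b, \<lambda>b. al * Jst p b - Jst C b / f, \<lambda>b. - Jst p b / f] ! k) b))"

lemma frame_carrier: "frame n w p \<in> carrier_mat (2*n+2) 3"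
  and coframe_carrier: "coframe n w p \<in> carrier_mat 3 (2*n+2)"
  by (simp_all add: frame_def coframe_def Let_def)

lemma sum_less_3: "(\<Sum>k<3. h k) = h 0 + h 1 + (h (2::nat) :: 'a::comm_monoid_add)"
  by (simp add: numeral_3_eq_3 numeral_2_eq_2 add.assoc)

lemma vol_matrix_eq_low_rank:
  assumes p: "rinner n p p = 1" and f: "fw n w p \<noteq> 0"
  shows "mat (2*n+2) (2*n+2) (\<lambda>(a, b). vol_matrix n w p a b)
         = (1 / fw n w p) \<cdot>\<^sub>m (1\<^sub>m (2*n+2) + frame n w p * coframe n w p)"
proof (rule eq_matI)
  fix a b assume "a < dim_row ((1 / fw n w p) \<cdot>\<^sub>m (1\<^sub>m (2*n+2) + frame n w p * coframe n w p))"
    and "b < dim_col ((1 / fw n w p) \<cdot>\<^sub>m (1\<^sub>m (2*n+2) + frame n w p * coframe n w p))"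
  then have a: "a < 2*n+2" and b: "b < 2*n+2"
    by (simp_all add: frame_def coframe_def Let_def)
  then show "mat (2*n+2) (2*n+2) (\<lambda>(a, b). vol_matrix n w p a b) $$ (a, b)
      = ((1 / fw n w p) \<cdot>\<^sub>m (1\<^sub>m (2*n+2) + frame n w p * coframe n w p)) $$ (a, b)"
    using f vol_matrix_entry[OF p f a b]
    by (simp add: frame_def coframe_def Let_def scalar_prod_def atLeast0LessThan sum_less_3
        field_simps)
qed (simp_all add: frame_def coframe_def Let_def)

lemma det_one_add_coframe_frame:
  assumes p: "rinner n p p = 1" and f_nz: "fw n w p \<noteq> 0"
  shows "det (1\<^sub>m 3 + coframe n w p * frame n w p) = 1"
proof -
  define f where "f = fw n w p"
  have f: "f \<noteq> 0"
    using f_nz by (simp add: f_def)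
  define C where "C = wdiag w p"
  define al where "al = rinner n C C / f\<^sup>2 + 1 / f"
  define rows where "rows = [\<lambda>b. (f - 1) * p b, \<lambda>b. al * Jst p b - Jst C b / f, \<lambda>b. - Jst p b / f]"
  define cols where "cols = [p, Jst p, Jst C]"
  note gram = rinner_frame_vectors(1,2,5)[OF p] rinner_frame_vectors(3,4,6-8)[OF p, of w, folded f_def C_def]
  have entry: "(coframe n w p * frame n w p) $$ (i, j) = rinner n (rows ! i) (cols ! j)"
    if "i < 3" "j < 3" for i j
    using that unfolding rinner_def
    by (simp add: frame_def coframe_def Let_def scalar_prod_def atLeast0LessThan
        rows_def cols_def f_def C_def al_def)
  have row0: "rinner n (rows ! 0) (cols ! 0) = f - 1" "rinner n (rows ! 0) (cols ! 1) = 0"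
      "rinner n (rows ! 0) (cols ! 2) = 0"
    using p gram by (simp_all add: rows_def cols_def rinner_linear)
  have "rinner n (rows ! 1) (cols ! 2) = al * f - rinner n C C / f"
    using gram unfolding rows_def cols_def by (simp add: rinner_linear rinner_divide_left)
  also have "\<dots> = 1"
    using f by (simp add: al_def field_simps power2_eq_square)
  finally have row1: "rinner n (rows ! 1) (cols ! 2) = 1" .
  have row1': "rinner n (rows ! 1) (cols ! 0) = 0" "rinner n (rows ! 1) (cols ! 1) = al - 1"
    using f gram unfolding rows_def cols_def by (simp_all add: rinner_linear rinner_divide_left)
  have row2: "rinner n (rows ! 2) (cols ! 0) = 0" "rinner n (rows ! 2) (cols ! 1) = - 1 / f"
      "rinner n (rows ! 2) (cols ! 2) = - 1"
    using f gram unfolding rows_def cols_def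
    by (simp_all add: rinner_linear rinner_divide_left)
  have "1\<^sub>m 3 + coframe n w p * frame n w p
      = mat 3 3 (\<lambda>(i, j). if i = 0 \<and> j = 0 then f else if i = 0 \<or> j = 0 then 0
                          else [[al, 1], [- 1 / f, 0]] ! (i - 1) ! (j - 1))"
    (is "_ = ?K")
  proof (rule eq_matI)
    fix i j assume "i < dim_row ?K" "j < dim_col ?K"
    then have "i \<in> {0, 1, 2}" "j \<in> {0, 1, 2}" by auto
    then show "(1\<^sub>m 3 + coframe n w p * frame n w p) $$ (i, j) = ?K $$ (i, j)"
      using frame_carrier[of n w p] coframe_carrier[of n w p] entry row0 row1 row1' row2
      by auto
  qed (use frame_carrier[of n w p] coframe_carrier[of n w p] in auto)
  then show ?thesis
    using f det_mat3_block_diag[of f "\<lambda>i j. [[al, 1], [- 1 / f, 0]] ! i ! j"] by simp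
qed

lemma vol_density_sphere:
  assumes p: "rinner n p p = 1" and f: "fw n w p > 0"
  shows "vol_density n w p = (1 / fw n w p) ^ (n + 1)"
proof -
  have "det (1\<^sub>m (2*n+2) + frame n w p * coframe n w p) = 1"
    using det_one_add_mult_commute[OF frame_carrier coframe_carrier]
      det_one_add_coframe_frame[OF p less_imp_neq[OF f, symmetric]] by simp
  then have "det_nat (2*n+2) (vol_matrix n w p) = (1 / fw n w p) ^ ((n + 1) * 2)"
    unfolding det_nat_eq_det vol_matrix_eq_low_rank[OF p less_imp_neq[OF f, symmetric]]
    using frame_carrier[of n w p] coframe_carrier[of n w p] by (simp add: det_smult algebra_simps)
  then have "det_nat (2*n+2) (vol_matrix n w p) = ((1 / fw n w p) ^ (n + 1))\<^sup>2"
    by (simp only: power_mult)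
  then show ?thesis
    using f by (simp add: vol_density_eq_det)
qed


section \<open>Integration in polar coordinates\<close>

abbreviation lborel_pi :: "nat \<Rightarrow> (nat \<Rightarrow> real) measure" where
  "lborel_pi n \<equiv> Pi\<^sub>M {..<2*n+2} (\<lambda>_. lborel)"

lemma rinner_self_eq_sum_squares: "rinner n y y = (\<Sum>k<2*n+2. (y k)\<^sup>2)"
  unfolding rinner_def by (simp add: power2_eq_square)

lemma rinner_self_nonneg: "0 \<le> rinner n y y"
  unfolding rinner_self_eq_sum_squares by (intro sum_nonneg) simp

lemma fw_eq_sum_squares: "fw n w y = (\<Sum>k<2*n+2. w (k div 2) * (y k)\<^sup>2)"
  unfolding fw_def xc_def yc_def sum_lessThan_pairs by (simp add: algebra_simps)

lemma fw_nonneg: "\<forall>i\<le>n. w i > 0 \<Longrightarrow> 0 \<le> fw n w y"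
  unfolding fw_def by (intro sum_nonneg) (auto intro!: mult_nonneg_nonneg)

lemma fw_pos:
  assumes w: "\<forall>i\<le>n. w i > 0" and y: "0 < rinner n y y"
  shows "0 < fw n w y"
proof -
  obtain k where k: "k < 2*n+2" "y k \<noteq> 0"
    using y unfolding rinner_self_eq_sum_squares
    by (metis (no_types, lifting) lessThan_iff sum.neutral zero_power2 less_irrefl)
  show ?thesis
    unfolding fw_eq_sum_squares
  proof (rule sum_pos2[where i = k])
    show "0 < w (k div 2) * (y k)\<^sup>2"
      using w k by simp
    show "0 \<le> w (i div 2) * (y i)\<^sup>2" if "i \<in> {..<2*n+2}" for i
      using w that by (simp add: less_imp_le)
  qed (use k in simp_all)
qed

definition dilate :: "nat \<Rightarrow> real \<Rightarrow> (nat \<Rightarrow> real) \<Rightarrow> nat \<Rightarrow> real" where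
  "dilate n r y = (\<lambda>k\<in>{..<2*n+2}. sqrt r * y k)"

lemma rinner_dilate:
  "0 \<le> r \<Longrightarrow> rinner n (dilate n r y) (dilate n r y) = r * rinner n y y"
  unfolding rinner_self_eq_sum_squares sum_distrib_left dilate_def by (intro sum.cong) (simp_all add: power_mult_distrib)

lemma fw_dilate:
  "0 \<le> r \<Longrightarrow> fw n w (dilate n r y) = r * fw n w y"
  unfolding fw_eq_sum_squares sum_distrib_left dilate_def by (intro sum.cong) (simp_all add: power_mult_distrib)

lemma nn_integral_PiM_lborel_scale:
  fixes c :: real
  assumes "finite I" "c > 0" "H \<in> borel_measurable (Pi\<^sub>M I (\<lambda>_. lborel))"
  shows "(\<integral>\<^sup>+x. H (\<lambda>k\<in>I. c * x k) \<partial>Pi\<^sub>M I (\<lambda>_. lborel))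
       = ennreal (inverse c ^ card I) * (\<integral>\<^sup>+x. H x \<partial>Pi\<^sub>M I (\<lambda>_. lborel))"
  using assms(1,3)
proof (induction I arbitrary: H rule: finite_induct)
  case empty
  have "(\<lambda>k\<in>{}. c * x k) = (\<lambda>_. undefined)" for x by auto
  then show ?case by (simp add: PiM_empty nn_integral_count_space_finite)
next
  case (insert i I)
  interpret product_sigma_finite "\<lambda>_. lborel" by standard
  note Hm[measurable] = insert.prems
  define K where "K = (\<lambda>z. \<integral>\<^sup>+y. H (z(i := y)) \<partial>lborel)"
  have Km[measurable]: "K \<in> borel_measurable (Pi\<^sub>M I (\<lambda>_. lborel))"
    unfolding K_def using insert.hyps by measurable
  have inner: "(\<integral>\<^sup>+y. H (z(i := c * y)) \<partial>lborel) = ennreal (inverse c) * K z"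
    if z: "z \<in> space (Pi\<^sub>M I (\<lambda>_. lborel))" for z
  proof -
    have "(\<lambda>y. H (z(i := y))) \<in> borel_measurable borel"
      using measurable_comp[OF measurable_component_update[OF z \<open>i \<notin> I\<close>] Hm] by (simp add: comp_def)
    then have "K z = ennreal \<bar>c\<bar> * (\<integral>\<^sup>+y. H (z(i := 0 + c * y)) \<partial>lborel)"
      unfolding K_def using \<open>c > 0\<close> by (intro nn_integral_real_affine) auto
    with \<open>c > 0\<close> show ?thesis
      by (simp add: mult.assoc[symmetric] ennreal_mult[symmetric])
  qed
  have restrict_upd: "(\<lambda>k\<in>insert i I. c * (x(i := y)) k) = (\<lambda>k\<in>I. c * x k)(i := c * y)" for x y
    using insert.hyps by (auto simp: fun_eq_iff restrict_def)
  have in_space: "(\<lambda>k\<in>I. c * x k) \<in> space (Pi\<^sub>M I (\<lambda>_. lborel))" for x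
    by (simp add: space_PiM)
  have "(\<integral>\<^sup>+x. H (\<lambda>k\<in>insert i I. c * x k) \<partial>Pi\<^sub>M (insert i I) (\<lambda>_. lborel))
      = (\<integral>\<^sup>+x. (\<integral>\<^sup>+y. H (\<lambda>k\<in>insert i I. c * (x(i := y)) k) \<partial>lborel) \<partial>Pi\<^sub>M I (\<lambda>_. lborel))"
    by (rule product_nn_integral_insert) (use insert.hyps in auto)
  also have "\<dots> = (\<integral>\<^sup>+x. ennreal (inverse c) * K (\<lambda>k\<in>I. c * x k) \<partial>Pi\<^sub>M I (\<lambda>_. lborel))"
    by (rule nn_integral_cong) (simp only: restrict_upd inner[OF in_space])
  also have "\<dots> = ennreal (inverse c) * (ennreal (inverse c ^ card I) * (\<integral>\<^sup>+x. K x \<partial>Pi\<^sub>M I (\<lambda>_. lborel)))"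
    by (simp add: nn_integral_cmult insert.IH[OF Km])
  also have "(\<integral>\<^sup>+x. K x \<partial>Pi\<^sub>M I (\<lambda>_. lborel)) = (\<integral>\<^sup>+x. H x \<partial>Pi\<^sub>M (insert i I) (\<lambda>_. lborel))"
    unfolding K_def by (rule product_nn_integral_insert[symmetric]) (use insert.hyps in auto)
  finally show ?case
    using insert.hyps \<open>c > 0\<close> by (simp add: ennreal_mult mult.assoc)
qed

definition shell :: "nat \<Rightarrow> (nat \<Rightarrow> real) set" where
  "shell n = {y. 1 \<le> rinner n y y \<and> rinner n y y \<le> exp 1}"

lemma nn_integral_inverse_Icc:
  fixes a b :: real
  assumes "0 < a" "a \<le> b"
  shows "(\<integral>\<^sup>+r. ennreal (1 / r) * indicator {a..b} r \<partial>lborel) = ennreal (ln b - ln a)"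
proof (rule nn_integral_FTC_Icc[where F = ln])
  show "DERIV ln x :> 1 / x" "0 \<le> 1 / x" if "x \<in> {a..b}" for x
    using that assms by (auto intro!: derivative_eq_intros)
qed (use assms in auto)

lemma nn_integral_shell_radius:
  "(\<integral>\<^sup>+r. indicator {0<..} r * ennreal (1 / r) * indicator {r. 1 \<le> a / r \<and> a / r \<le> exp 1} r \<partial>lborel)
   = indicator {a. 0 < a} (a::real)"
proof (cases "a > 0")
  case True
  have "indicator {0<..} r * ennreal (1 / r) * indicator {r. 1 \<le> a / r \<and> a / r \<le> exp 1} r
      = ennreal (1 / r) * indicator {a / exp 1 .. a} r" for r :: real
  proof (cases "r > 0")
    case False
    then have "r * exp 1 \<le> 0"
      by (simp add: mult_nonpos_nonneg)
    with False True show ?thesis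
      by (auto simp: indicator_def field_simps)
  qed (use True in \<open>auto simp: indicator_def field_simps\<close>)
  with True show ?thesis
    by (simp add: nn_integral_inverse_Icc ln_div field_simps)
next
  case False
  then have "(\<lambda>r. indicator {0<..} r * ennreal (1 / r) * indicator {r. 1 \<le> a / r \<and> a / r \<le> exp 1} r)
      = (\<lambda>_. 0)"
    by (auto simp: fun_eq_iff indicator_def divide_nonpos_pos)
  with False show ?thesis by simp
qed

lemma nn_integral_shell_rescale:
  assumes F[measurable]: "F \<in> borel_measurable (lborel_pi n)"
  shows "(\<integral>\<^sup>+x. indicator {0<..} r * ennreal (1 / r)
              * (indicator {x. 1 \<le> rinner n x x / r \<and> rinner n x x / r \<le> exp 1} x * F x) \<partial>lborel_pi n)
    = (\<integral>\<^sup>+y. indicator (shell n) y * (indicator {0<..} r * ennreal (r ^ n) * F (dilate n r y)) \<partial>lborel_pi n)"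
proof (cases "r > 0")
  case r: True
  define G where "G x = indicator {x. 1 \<le> rinner n x x / r \<and> rinner n x x / r \<le> exp 1} x * F x" for x
  have G[measurable]: "G \<in> borel_measurable (lborel_pi n)"
    unfolding G_def rinner_def by measurable
  have G_dilate: "G (dilate n r y) = indicator (shell n) y * F (dilate n r y)" for y
    unfolding G_def indicator_def mem_Collect_eq rinner_dilate[OF less_imp_le[OF r]]
    using r by (simp add: shell_def)
  have scale: "r ^ n * inverse (sqrt r) ^ (2*n+2) = 1 / r"
  proof -
    have "inverse (sqrt r) ^ (2 * (n + 1)) = inverse r ^ (n + 1)"
      unfolding power_mult using r by (simp add: power_inverse)
    with r show ?thesis
      by (simp add: field_simps)
  qed
  have "(\<integral>\<^sup>+y. indicator (shell n) y * (indicator {0<..} r * ennreal (r ^ n) * F (dilate n r y)) \<partial>lborel_pi n)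
      = (\<integral>\<^sup>+y. ennreal (r ^ n) * G (dilate n r y) \<partial>lborel_pi n)"
    using r by (simp add: G_dilate mult_ac)
  also have "\<dots> = ennreal (r ^ n) * (\<integral>\<^sup>+y. G (dilate n r y) \<partial>lborel_pi n)"
    by (rule nn_integral_cmult) (unfold dilate_def, measurable)
  also have "\<dots> = ennreal (r ^ n) * (ennreal (inverse (sqrt r) ^ (2*n+2)) * (\<integral>\<^sup>+x. G x \<partial>lborel_pi n))"
    unfolding dilate_def using r by (subst nn_integral_PiM_lborel_scale[OF finite_lessThan _ G]) auto
  also have "\<dots> = ennreal (r ^ n * inverse (sqrt r) ^ (2*n+2)) * (\<integral>\<^sup>+x. G x \<partial>lborel_pi n)"
    using r by (simp add: ennreal_mult mult.assoc)
  also have "\<dots> = ennreal (1 / r) * (\<integral>\<^sup>+x. G x \<partial>lborel_pi n)"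
    unfolding scale ..
  also have "\<dots> = (\<integral>\<^sup>+x. ennreal (1 / r) * G x \<partial>lborel_pi n)"
    by (rule nn_integral_cmult[symmetric, OF G])
  finally show ?thesis
    using r unfolding G_def by (simp add: mult_ac)
qed simp

text \<open>For x \<noteq> 0 the measure dr/r gives mass 1 to the radii r with x / sqrt r in the shell;
  averaging over r and substituting x = sqrt r * y yields polar coordinates with the shell as
  a section.\<close>

lemma nn_integral_polar:
  assumes F[measurable]: "F \<in> borel_measurable (lborel_pi n)"
  shows "(\<integral>\<^sup>+x. F x * indicator {x. 0 < rinner n x x} x \<partial>lborel_pi n)
    = (\<integral>\<^sup>+y. indicator (shell n) y *
          (\<integral>\<^sup>+r. indicator {0<..} r * ennreal (r ^ n) * F (dilate n r y) \<partial>lborel)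
        \<partial>lborel_pi n)" (is "_ = ?rhs")
proof -
  interpret P: finite_product_sigma_finite "\<lambda>_. lborel" "{..<2*n+2}"
    by standard auto
  interpret pair_sigma_finite "lborel_pi n" lborel
    by (intro pair_sigma_finite.intro P.sigma_finite_measure_axioms lborel.sigma_finite_measure_axioms)
  define P where "P r x = (indicator {x. 1 \<le> rinner n x x / r \<and> rinner n x x / r \<le> exp 1} x :: ennreal)"
    for r x
  have [measurable]: "(\<lambda>y. indicator (shell n) y :: ennreal) \<in> borel_measurable (lborel_pi n)"
    unfolding shell_def rinner_def by measurable
  have "(\<integral>\<^sup>+x. F x * indicator {x. 0 < rinner n x x} x \<partial>lborel_pi n)
      = (\<integral>\<^sup>+x. (\<integral>\<^sup>+r. indicator {0<..} r * ennreal (1 / r) * (P r x * F x) \<partial>lborel) \<partial>lborel_pi n)"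
  proof (rule nn_integral_cong)
    fix x
    have "(\<integral>\<^sup>+r. indicator {0<..} r * ennreal (1 / r) * (P r x * F x) \<partial>lborel)
        = (\<integral>\<^sup>+r. indicator {0<..} r * ennreal (1 / r) * P r x \<partial>lborel) * F x"
      by (subst nn_integral_multc[symmetric]) (auto simp: P_def mult_ac)
    then show "F x * indicator {x. 0 < rinner n x x} x
        = (\<integral>\<^sup>+r. indicator {0<..} r * ennreal (1 / r) * (P r x * F x) \<partial>lborel)"
      using nn_integral_shell_radius[of "rinner n x x"] by (simp add: P_def indicator_def)
  qed
  also have "\<dots> = (\<integral>\<^sup>+r. (\<integral>\<^sup>+x. indicator {0<..} r * ennreal (1 / r) * (P r x * F x) \<partial>lborel_pi n) \<partial>lborel)"
    by (rule Fubini'[symmetric]) (unfold P_def rinner_def, measurable)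
  also have "\<dots> = (\<integral>\<^sup>+r. (\<integral>\<^sup>+y. indicator (shell n) y * (indicator {0<..} r * ennreal (r ^ n)
                * F (dilate n r y)) \<partial>lborel_pi n) \<partial>lborel)"
    unfolding P_def nn_integral_shell_rescale[OF F] ..
  also have "\<dots> = (\<integral>\<^sup>+y. (\<integral>\<^sup>+r. indicator (shell n) y * (indicator {0<..} r * ennreal (r ^ n)
                * F (dilate n r y)) \<partial>lborel) \<partial>lborel_pi n)"
    by (rule Fubini') (unfold dilate_def, measurable)
  also have "\<dots> = ?rhs"
    by (intro nn_integral_cong nn_integral_cmult) (unfold dilate_def, measurable)
  finally show ?thesis .
qed

definition shell_integral :: "nat \<Rightarrow> (nat \<Rightarrow> real) \<Rightarrow> ennreal" where
  "shell_integral n w = (\<integral>\<^sup>+y. indicator (shell n) y * ennreal (1 / fw n w y ^ (n + 1)) \<partial>lborel_pi n)"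

lemma nn_integral_radial_profile:
  assumes F: "F \<in> borel_measurable (lborel_pi n)"
    and profile: "\<And>y. y \<in> shell n \<Longrightarrow>
      (\<integral>\<^sup>+r. indicator {0<..} r * ennreal (r ^ n) * F (dilate n r y) \<partial>lborel)
      = K * ennreal (1 / fw n w y ^ (n + 1))"
  shows "(\<integral>\<^sup>+x. F x * indicator {x. 0 < rinner n x x} x \<partial>lborel_pi n) = K * shell_integral n w"
proof -
  have "(\<integral>\<^sup>+x. F x * indicator {x. 0 < rinner n x x} x \<partial>lborel_pi n)
      = (\<integral>\<^sup>+y. K * (indicator (shell n) y * ennreal (1 / fw n w y ^ (n + 1))) \<partial>lborel_pi n)"
    unfolding nn_integral_polar[OF F]
  proof (rule nn_integral_cong)
    fix y
    show "indicator (shell n) y *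
        (\<integral>\<^sup>+r. indicator {0<..} r * ennreal (r ^ n) * F (dilate n r y) \<partial>lborel)
      = K * (indicator (shell n) y * ennreal (1 / fw n w y ^ (n + 1)))"
      by (cases "y \<in> shell n") (simp only: profile indicator_simps mult_1, simp)
  qed
  also have "\<dots> = K * shell_integral n w"
    unfolding shell_integral_def
    by (rule nn_integral_cmult) (unfold shell_def rinner_def fw_def xc_def yc_def, measurable)
  finally show ?thesis .
qed

lemma nn_integral_power_upto:
  fixes b :: real
  assumes b: "b > 0"
  shows "(\<integral>\<^sup>+r. indicator {0<..} r * ennreal (r ^ n) * indicator {r. r * b \<le> 1} r \<partial>lborel)
         = ennreal ((1 / b) ^ (n + 1) / real (n + 1))"
proof -
  have "AE r in lborel. indicator {0<..} r * ennreal (r ^ n) * indicator {r. r * b \<le> 1} r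
      = ennreal (r ^ n) * indicator {0 .. 1 / b} r"
    using AE_lborel_singleton[of 0] by eventually_elim (use b in \<open>auto simp: indicator_def field_simps\<close>)
  then have "(\<integral>\<^sup>+r. indicator {0<..} r * ennreal (r ^ n) * indicator {r. r * b \<le> 1} r \<partial>lborel)
      = (\<integral>\<^sup>+r. ennreal (r ^ n) * indicator {0 .. 1 / b} r \<partial>lborel)"
    by (rule nn_integral_cong_AE)
  also have "\<dots> = ennreal ((1 / b) ^ (n + 1) / real (n + 1) - 0 ^ (n + 1) / real (n + 1))"
  proof (rule nn_integral_FTC_Icc)
    show "((\<lambda>r. r ^ (n + 1) / real (n + 1)) has_real_derivative r ^ n) (at r)" for r :: real
      using DERIV_cdivide[OF DERIV_pow[of "n + 1" r], of "real (n + 1)"] by simp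
  qed (use b in auto)
  finally show ?thesis by simp
qed

lemma nn_integral_power_exp:
  fixes c :: real
  assumes c: "c > 0"
  shows "(\<integral>\<^sup>+r. indicator {0<..} r * ennreal (r ^ n) * ennreal (exp (- (r * c))) \<partial>lborel)
         = ennreal (fact n / c ^ (n + 1))"
proof -
  define J where "J = (\<integral>\<^sup>+x. ennreal (x ^ n * exp (- (x * c))) * indicator {0..} x \<partial>lborel)"
  have "ennreal (fact n) = (\<integral>\<^sup>+x. ennreal (x ^ n * exp (- x)) * indicator {0..} x \<partial>lborel)"
    using nn_intergal_power_times_exp_Ici[of n] by simp
  also have "\<dots> = ennreal c * (\<integral>\<^sup>+x. ennreal ((c * x) ^ n * exp (- (c * x))) * indicator {0..} (c * x) \<partial>lborel)"
    using c nn_integral_real_affine[of "\<lambda>x. ennreal (x ^ n * exp (- x)) * indicator {0..} x" c 0]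
    by simp
  also have "(\<integral>\<^sup>+x. ennreal ((c * x) ^ n * exp (- (c * x))) * indicator {0..} (c * x) \<partial>lborel)
      = (\<integral>\<^sup>+x. ennreal (c ^ n) * (ennreal (x ^ n * exp (- (x * c))) * indicator {0..} x) \<partial>lborel)"
    using c by (intro nn_integral_cong)
      (auto simp: indicator_def zero_le_mult_iff power_mult_distrib ennreal_mult mult_ac)
  also have "\<dots> = ennreal (c ^ n) * J"
    unfolding J_def by (rule nn_integral_cmult) measurable
  finally have "ennreal (fact n) = ennreal (c ^ (n + 1)) * J"
    using c by (simp add: ennreal_mult mult.assoc)
  then have "J = ennreal (fact n / c ^ (n + 1))"
    using c by (simp add: divide_ennreal[symmetric] ennreal_mult_divide_eq mult.commute)
  moreover have "AE r in lborel. indicator {0<..} r * ennreal (r ^ n) * ennreal (exp (- (r * c)))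
      = ennreal (r ^ n * exp (- (r * c))) * indicator {0..} r"
    using AE_lborel_singleton[of 0] by eventually_elim (auto simp: indicator_def ennreal_mult)
  ultimately show ?thesis
    unfolding J_def by (simp add: nn_integral_cong_AE)
qed

lemma nn_integral_gaussian:
  fixes a :: real
  assumes a: "a > 0"
  shows "(\<integral>\<^sup>+t. ennreal (exp (- (a * t\<^sup>2))) \<partial>lborel) = ennreal (sqrt (pi / a))"
proof -
  define s where "s = 1 / sqrt (2 * a)"
  have s: "s > 0" "2 * pi * s\<^sup>2 = pi / a" "- ((t - 0)\<^sup>2) / (2 * s\<^sup>2) = - (a * t\<^sup>2)" for t
    using a by (simp_all add: s_def power_divide)
  have density: "exp (- (a * t\<^sup>2)) = sqrt (pi / a) * normal_density 0 s t" for t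
    unfolding normal_density_def s(2,3) using a by simp
  have "(\<integral>\<^sup>+t. ennreal (exp (- (a * t\<^sup>2))) \<partial>lborel)
      = (\<integral>\<^sup>+t. ennreal (sqrt (pi / a)) * ennreal (normal_density 0 s t) \<partial>lborel)"
    using a by (simp add: density ennreal_mult)
  also have "\<dots> = ennreal (sqrt (pi / a)) * ennreal (\<integral>t. normal_density 0 s t \<partial>lborel)"
    using s by (simp add: nn_integral_cmult nn_integral_eq_integral)
  finally show ?thesis
    using s by simp
qed

lemma nn_integral_exp_neg_fw:
  assumes w: "\<forall>i\<le>n. w i > 0"
  shows "(\<integral>\<^sup>+x. ennreal (exp (- fw n w x)) \<partial>lborel_pi n) = ennreal (pi ^ (n + 1) / (\<Prod>i\<le>n. w i))"
proof -
  interpret product_sigma_finite "\<lambda>_. lborel" by standard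
  have w': "0 < w (k div 2)" if "k < 2*n+2" for k
    using w that by auto
  have "(\<integral>\<^sup>+x. ennreal (exp (- fw n w x)) \<partial>lborel_pi n)
      = (\<integral>\<^sup>+x. (\<Prod>k<2*n+2. ennreal (exp (- (w (k div 2) * (x k)\<^sup>2)))) \<partial>lborel_pi n)"
    unfolding fw_eq_sum_squares sum_negf[symmetric] exp_sum[OF finite_lessThan]
    by (subst prod_ennreal) auto
  also have "\<dots> = (\<Prod>k<2*n+2. (\<integral>\<^sup>+t. ennreal (exp (- (w (k div 2) * t\<^sup>2))) \<partial>lborel))"
    by (rule product_nn_integral_prod) auto
  also have "\<dots> = (\<Prod>k<2*n+2. ennreal (sqrt (pi / w (k div 2))))"
    using w' by (simp add: nn_integral_gaussian)
  also have "\<dots> = ennreal (\<Prod>k<2*n+2. sqrt (pi / w (k div 2)))"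
    using w' by (intro prod_ennreal) (simp add: less_imp_le)
  also have "\<dots> = ennreal (\<Prod>i\<le>n. pi / w i)"
    unfolding prod_lessThan_pairs using w by (auto intro!: arg_cong[where f = ennreal] prod.cong)
  finally show ?thesis
    by (simp add: prod_dividef)
qed

definition cone_density :: "nat \<Rightarrow> (nat \<Rightarrow> real) \<Rightarrow> (nat \<Rightarrow> real) \<Rightarrow> real" where
  "cone_density n w x = indicator {x. rinner n x x \<le> 1} x * (rinner n x x / fw n w x) ^ (n + 1)"

lemma cone_density_measurable [measurable]: "cone_density n w \<in> borel_measurable (lborel_pi n)"
  unfolding cone_density_def[abs_def] rinner_def fw_def xc_def yc_def by measurable

lemma cone_density_dilate:
  assumes "r > 0"
  shows "cone_density n w (dilate n r y)
         = indicator {r. r * rinner n y y \<le> 1} r * (rinner n y y / fw n w y) ^ (n + 1)"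
  unfolding cone_density_def indicator_def mem_Collect_eq
    rinner_dilate[OF less_imp_le[OF assms]] fw_dilate[OF less_imp_le[OF assms]]
  using assms by (simp add: mult.commute)

lemma radial_profile_cone_density:
  assumes w: "\<forall>i\<le>n. w i > 0" and y: "0 < rinner n y y"
  shows "(\<integral>\<^sup>+r. indicator {0<..} r * ennreal (r ^ n) * ennreal (cone_density n w (dilate n r y)) \<partial>lborel)
         = ennreal (1 / real (n + 1)) * ennreal (1 / fw n w y ^ (n + 1))"
proof -
  define a where "a = rinner n y y"
  define c where "c = fw n w y"
  have a: "a > 0" and c: "c > 0"
    using y fw_pos[OF w y] by (simp_all add: a_def c_def)
  have "(\<integral>\<^sup>+r. indicator {0<..} r * ennreal (r ^ n) * ennreal (cone_density n w (dilate n r y)) \<partial>lborel)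
      = (\<integral>\<^sup>+r. ennreal ((a / c) ^ (n + 1)) * (indicator {0<..} r * ennreal (r ^ n) * indicator {r. r * a \<le> 1} r) \<partial>lborel)"
    using a c by (intro nn_integral_cong)
      (auto simp: cone_density_dilate a_def[symmetric] c_def[symmetric] indicator_def ennreal_mult mult_ac)
  also have "\<dots> = ennreal ((a / c) ^ (n + 1)) * ennreal ((1 / a) ^ (n + 1) / real (n + 1))"
    by (subst nn_integral_cmult) (simp_all add: nn_integral_power_upto[OF a])
  also have "\<dots> = ennreal ((a / c) ^ (n + 1) * ((1 / a) ^ (n + 1) / real (n + 1)))"
    using a c by (intro ennreal_mult[symmetric]) auto
  also have "(a / c) ^ (n + 1) * ((1 / a) ^ (n + 1) / real (n + 1)) = 1 / real (n + 1) * (1 / c ^ (n + 1))"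
    using a by (simp add: power_divide)
  also have "ennreal (1 / real (n + 1) * (1 / c ^ (n + 1))) = ennreal (1 / real (n + 1)) * ennreal (1 / c ^ (n + 1))"
    using c by (intro ennreal_mult) auto
  finally show ?thesis
    unfolding c_def .
qed

lemma radial_profile_exp_neg_fw:
  assumes w: "\<forall>i\<le>n. w i > 0" and y: "0 < rinner n y y"
  shows "(\<integral>\<^sup>+r. indicator {0<..} r * ennreal (r ^ n) * ennreal (exp (- fw n w (dilate n r y))) \<partial>lborel)
         = ennreal (fact n) * ennreal (1 / fw n w y ^ (n + 1))"
proof -
  have c: "0 < fw n w y"
    using fw_pos[OF w y] .
  have "(\<integral>\<^sup>+r. indicator {0<..} r * ennreal (r ^ n) * ennreal (exp (- fw n w (dilate n r y))) \<partial>lborel)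
      = (\<integral>\<^sup>+r. indicator {0<..} r * ennreal (r ^ n) * ennreal (exp (- (r * fw n w y))) \<partial>lborel)"
    by (intro nn_integral_cong) (auto simp: indicator_def fw_dilate)
  also have "\<dots> = ennreal (fact n / fw n w y ^ (n + 1))"
    using nn_integral_power_exp[OF c] .
  finally show ?thesis
    using c by (simp add: ennreal_mult[symmetric])
qed

lemma AE_rinner_pos: "AE x in lborel_pi n. 0 < rinner n x x"
proof (rule AE_I)
  interpret product_sigma_finite "\<lambda>_. lborel :: real measure" by standard
  show "{x \<in> space (lborel_pi n). \<not> 0 < rinner n x x} \<subseteq> (\<Pi>\<^sub>E k\<in>{..<2*n+2}. {0})"
  proof
    fix x assume x: "x \<in> {x \<in> space (lborel_pi n). \<not> 0 < rinner n x x}"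
    then have "(\<Sum>k<2*n+2. (x k)\<^sup>2) = 0"
      using rinner_self_nonneg[of n x] by (simp add: rinner_self_eq_sum_squares)
    then have "\<forall>k<2*n+2. x k = 0"
      by (subst (asm) sum_nonneg_eq_0_iff) auto
    moreover have "x \<in> extensional {..<2*n+2}"
      using x by (auto simp: space_PiM PiE_def)
    ultimately show "x \<in> (\<Pi>\<^sub>E k\<in>{..<2*n+2}. {0})"
      unfolding PiE_iff by simp
  qed
  show "(\<Pi>\<^sub>E k\<in>{..<2*n+2}. {0}) \<in> sets (lborel_pi n)"
    by (rule sets_PiM_I_finite) auto
  show "emeasure (lborel_pi n) (\<Pi>\<^sub>E k\<in>{..<2*n+2}. {0::real}) = 0"
    by (subst emeasure_PiM) auto
qed

lemma shell_integral_eq: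
  assumes w: "\<forall>i\<le>n. w i > 0"
  shows "shell_integral n w = ennreal (pi ^ (n + 1) / (\<Prod>i\<le>n. w i) / fact n)"
proof -
  have W: "0 < (\<Prod>i\<le>n. w i)"
    using w by (intro prod_pos) auto
  have "(\<lambda>x. ennreal (exp (- fw n w x))) \<in> borel_measurable (lborel_pi n)"
    unfolding fw_def xc_def yc_def by measurable
  then have "ennreal (fact n) * shell_integral n w
      = (\<integral>\<^sup>+x. ennreal (exp (- fw n w x)) * indicator {x. 0 < rinner n x x} x \<partial>lborel_pi n)"
    by (rule nn_integral_radial_profile[symmetric]) (simp add: radial_profile_exp_neg_fw[OF w] shell_def)
  also have "\<dots> = (\<integral>\<^sup>+x. ennreal (exp (- fw n w x)) \<partial>lborel_pi n)"
    by (rule nn_integral_cong_AE) (use AE_rinner_pos[of n] in \<open>auto elim!: eventually_mono\<close>)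
  also have "\<dots> = ennreal (pi ^ (n + 1) / (\<Prod>i\<le>n. w i))"
    by (rule nn_integral_exp_neg_fw[OF w])
  finally have fact_shell: "ennreal (fact n) * shell_integral n w = ennreal (pi ^ (n + 1) / (\<Prod>i\<le>n. w i))" .
  have "shell_integral n w = ennreal (1 / fact n) * (ennreal (fact n) * shell_integral n w)"
    by (simp add: ennreal_mult[symmetric] mult.assoc[symmetric])
  also have "\<dots> = ennreal (pi ^ (n + 1) / (\<Prod>i\<le>n. w i) / fact n)"
    unfolding fact_shell using W by (simp add: ennreal_mult[symmetric])
  finally show ?thesis .
qed

lemma nn_integral_cone_density:
  assumes w: "\<forall>i\<le>n. w i > 0"
  shows "(\<integral>\<^sup>+x. ennreal (cone_density n w x) \<partial>lborel_pi n)
         = ennreal (pi ^ (n + 1) / (fact (n + 1) * (\<Prod>i\<le>n. w i)))"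
proof -
  have "(\<integral>\<^sup>+x. ennreal (cone_density n w x) \<partial>lborel_pi n)
      = (\<integral>\<^sup>+x. ennreal (cone_density n w x) * indicator {x. 0 < rinner n x x} x \<partial>lborel_pi n)"
  proof (rule nn_integral_cong)
    fix x
    have "rinner n x x = 0" if "\<not> 0 < rinner n x x"
      using that rinner_self_nonneg[of n x] by simp
    then show "ennreal (cone_density n w x) = ennreal (cone_density n w x) * indicator {x. 0 < rinner n x x} x"
      by (cases "0 < rinner n x x") (simp_all add: cone_density_def)
  qed
  also have "\<dots> = ennreal (1 / real (n + 1)) * shell_integral n w"
    by (rule nn_integral_radial_profile, measurable) (simp add: radial_profile_cone_density[OF w] shell_def)
  moreover have "0 < (\<Prod>i\<le>n. w i)"
    using w by (intro prod_pos) auto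
  ultimately show ?thesis
    by (simp add: shell_integral_eq[OF w] ennreal_mult[symmetric] field_simps)
qed

section \<open>The volume\<close>

lemma vol_density_zero: "vol_density n w (\<lambda>k. 0) = 0"
proof -
  have "fw n w (\<lambda>k. 0) = 0"
    by (simp add: fw_def xc_def yc_def)
  then have "g_w n w (\<lambda>k. 0) u v = 0" for u v
    by (simp add: g_w_def deta_w_def eta_w_def)
  moreover have "rinner n u (\<lambda>k. 0) = 0" for u
    by (simp add: rinner_def)
  ultimately show ?thesis
    by (simp add: vol_density_def det_nat_def)
qed

lemma sphere_integrand_eq_cone_density:
  assumes w: "\<forall>i\<le>n. w i > 0"
  shows "indicator {x. rinner n x x \<le> 1} x * vol_density n w (\<lambda>k. x k / sqrt (rinner n x x))
       = cone_density n w x"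
proof (cases "rinner n x x > 0")
  case False
  then have "rinner n x x = 0"
    using rinner_self_nonneg[of n x] by simp
  then show ?thesis
    by (simp add: cone_density_def vol_density_zero)
next
  case True
  define p where "p k = x k / sqrt (rinner n x x)" for k
  have sqrt_sq: "(sqrt (rinner n x x))\<^sup>2 = rinner n x x"
    using True by simp
  have "rinner n p p = rinner n x x / (sqrt (rinner n x x))\<^sup>2"
    by (simp only: rinner_self_eq_sum_squares p_def power_divide sum_divide_distrib)
  moreover have "fw n w p = fw n w x / (sqrt (rinner n x x))\<^sup>2"
    by (simp only: fw_eq_sum_squares p_def power_divide times_divide_eq_right sum_divide_distrib)
  ultimately have "vol_density n w p = (rinner n x x / fw n w x) ^ (n + 1)"
    using True fw_pos[OF w True] by (simp add: sqrt_sq vol_density_sphere)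
  then show ?thesis
    by (simp add: cone_density_def p_def[abs_def])
qed

lemma deformed_volume_eq:
  assumes w: "\<forall>i\<le>n. w i > 0"
  shows "deformed_volume n w = 2 * pi ^ (n + 1) / fact n * (1 / (\<Prod>i\<le>n. w i))"
proof -
  have W: "(\<Prod>i\<le>n. w i) > 0"
    using w by (intro prod_pos) auto
  have cone_nonneg: "0 \<le> cone_density n w x" for x
    using rinner_self_nonneg[of n x] fw_nonneg[OF w, of x] by (simp add: cone_density_def)
  have "(\<integral>x. cone_density n w x \<partial>lborel_pi n) = enn2real (\<integral>\<^sup>+x. ennreal (cone_density n w x) \<partial>lborel_pi n)"
    by (rule integral_eq_nn_integral[OF cone_density_measurable]) (simp add: cone_nonneg)
  also have "\<dots> = pi ^ (n + 1) / (fact (n + 1) * (\<Prod>i\<le>n. w i))"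
    unfolding nn_integral_cone_density[OF w] using W by simp
  finally have "deformed_volume n w = real (2*n+2) * (pi ^ (n + 1) / (fact (n + 1) * (\<Prod>i\<le>n. w i)))"
    by (simp add: deformed_volume_def sphere_integral_def sphere_integrand_eq_cone_density[OF w])
  also have "\<dots> = (real (n + 1) * (2 * pi ^ (n + 1))) / (real (n + 1) * (fact n * (\<Prod>i\<le>n. w i)))"
    by (simp add: algebra_simps)
  also have "\<dots> = 2 * pi ^ (n + 1) / fact n * (1 / (\<Prod>i\<le>n. w i))"
    by (subst mult_divide_mult_cancel_left) simp_all
  finally show ?thesis .
qed

theorem corollary6p1:
  fixes n :: nat and w \<beta> :: "nat \<Rightarrow> real"
  assumes wpos: "\<forall>i\<le>n. w i > 0"
    and generic: "\<forall>p\<in>unit_sphere n. closed_reeb_orbit n w p \<longrightarrow>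
                    (\<exists>i\<le>n. (xc p i)\<^sup>2 + (yc p i)\<^sup>2 = 1)"
    and denom: "\<forall>i\<le>n. (\<Prod>j\<in>{..n}-{i}. \<beta> i / w i * w j - \<beta> j) \<noteq> 0"
  shows "deformed_volume n w =
           2 * pi ^ (n+1) / fact n *
             (\<Sum>i\<le>n. 1 / w i ^ (n+1) * (\<beta> i ^ n / (\<Prod>j\<in>{..n}-{i}. \<beta> i / w i * w j - \<beta> j)))
       \<and> 2 * pi ^ (n+1) / fact n *
             (\<Sum>i\<le>n. 1 / w i ^ (n+1) * (\<beta> i ^ n / (\<Prod>j\<in>{..n}-{i}. \<beta> i / w i * w j - \<beta> j)))
         = 2 * pi ^ (n+1) / fact n * (1 / (\<Prod>i\<le>n. w i))"
proof -
  have "(\<Sum>i\<le>n. 1 / w i ^ (n+1) * (\<beta> i ^ n / (\<Prod>j\<in>{..n}-{i}. \<beta> i / w i * w j - \<beta> j)))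
      = 1 / (\<Prod>i\<le>n. w i)"
    using wpos denom by (intro weighted_sum_power_div_prod_diff) auto
  then show ?thesis
    using deformed_volume_eq[OF wpos] by simp
qed

end
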